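(* In the setting of the context, assume the matrix representing $A$ with respect to the fixed feasible basis has constant row sum $\theta_r$ (i.e. $c_i+a_i+b_i=\theta_r$ for $0\le i\le d$), where $\theta_r$ is an eigenvalue of $A$. Let $s\in\{0,\dots,d\}$ with $s\ne r$. The following are equivalent: (i) in $\Delta$, vertex $r$ is adjacent to vertex $s$ and to no other vertex; (ii) for $0\le i\le d$, $$c_i\theta^*_{i-1}+a_i\theta^*_i+b_i\theta^*_{i+1}-\theta_r\theta^*_i=(\theta_s-\theta_r)(\theta^*_i-a^*_r)$$ (terms with $c_0=0$ or $b_d=0$ vanish), and $A^*$ is not a scalar multiple of $I$.
   Context: Let $\mathbb F$ be a field, $d\ge1$, $V$ an $\mathbb F$-vector space of dimension $d+1$, $\mathcal A=\mathrm{End}(V)$ with identity $I$. Let $E^*_0,\dots,E^*_d\in\mathcal A$ satisfy $E^*_iE^*_j=\delta_{i,j}E^*_i$, $\mathrm{rank}(E^*_i)=1$. Let $A\in\mathcal A$ satisfy $E^*_iAE^*_j=0$ if $|i-j|>1$ and $\neq0$ if $|i-j|=1$. Assume $A$ has $d+1$ distinct eigenvalues $\theta_0,\dots,\theta_d\in\mathbb F$ with primitive idempotents $E_i=\prod_{j\ne i}\frac{A-\theta_jI}{\theta_i-\theta_j}$. Let $\theta^*_i\in\mathbb F$, $A^*=\sum_i\theta^*_iE^*_i$, $a^*_i=\mathrm{tr}(E_iA^* )$. Let $\Delta$ be the graph on $\{0,\dots,d\}$ with $i\sim j$ iff $i\ne j$ and $E_iA^*E_j\ne0$. A basis $v_0,\dots,v_d$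 of $V$ is feasible if $v_i\in E^*_iV$ for all $i$; fix one. Then $Av_i=b_{i-1}v_{i-1}+a_iv_i+c_{i+1}v_{i+1}$ ($v_{-1}=v_{d+1}=0$), with $a_i=\mathrm{tr}(E^*_iA)$, nonzero $b_0,\dots,b_{d-1}$, $c_1,\dots,c_d$, and $b_d=c_0=0$; i.e. the representing matrix has diagonal $a_i$, $(i,i+1)$-entry $b_i$, $(i,i-1)$-entry $c_i$. *)

theory Defs
  imports "Jordan_Normal_Form.DL_Rank" "Jordan_Normal_Form.Char_Poly"
begin

text \<open>Throughout, V = F^(d+1) (column vectors) and End(V) = (d+1) x (d+1) matrices over F.\<close>

definition mat_trace :: "'a::comm_ring_1 mat \<Rightarrow> 'a" where
  "mat_trace M = (\<Sum>i<dim_row M. M $$ (i, i))"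

definition prim_idem :: "nat \<Rightarrow> 'a::field mat \<Rightarrow> (nat \<Rightarrow> 'a) \<Rightarrow> nat \<Rightarrow> 'a mat" where
  "prim_idem d A th i =
     foldr (\<lambda>j M. ((1 / (th i - th j)) \<cdot>\<^sub>m (A - th j \<cdot>\<^sub>m 1\<^sub>m (d+1))) * M)
       (filter (\<lambda>j. j \<noteq> i) [0..<d+1]) (1\<^sub>m (d+1))"

definition dual_mat :: "nat \<Rightarrow> (nat \<Rightarrow> 'a::field mat) \<Rightarrow> (nat \<Rightarrow> 'a) \<Rightarrow> 'a mat" where
  "dual_mat d Es ths = mat (d+1) (d+1) (\<lambda>(k,l). \<Sum>i\<le>d. ths i * Es i $$ (k,l))"

definition coef_a :: "'a::field mat \<Rightarrow> nat \<Rightarrow> 'a" where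
  "coef_a B i = B $$ (i, i)"
definition coef_b :: "nat \<Rightarrow> 'a::field mat \<Rightarrow> nat \<Rightarrow> 'a" where
  "coef_b d B i = (if i < d then B $$ (i, i+1) else 0)"
definition coef_c :: "'a::field mat \<Rightarrow> nat \<Rightarrow> 'a" where
  "coef_c B i = (if 0 < i then B $$ (i, i-1) else 0)"

definition Delta_adj :: "nat \<Rightarrow> 'a::field mat \<Rightarrow> (nat \<Rightarrow> 'a) \<Rightarrow> (nat \<Rightarrow> 'a mat) \<Rightarrow> (nat \<Rightarrow> 'a) \<Rightarrow> nat \<Rightarrow> nat \<Rightarrow> bool" where
  "Delta_adj d A th Es ths i j \<longleftrightarrow>
     i \<noteq> j \<and> prim_idem d A th i * dual_mat d Es ths * prim_idem d A th j \<noteq> 0\<^sub>m (d+1) (d+1)"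

end

theory Submission
  imports Defs
begin

text \<open>
  Write \<open>n = d + 1\<close> and \<open>Q = P\<^sup>-\<^sup>1\<close>.  Feasibility makes \<open>E\<^sup>*\<^sub>i\<close> the rank-one matrix
  \<open>P e\<^sub>i e\<^sub>i\<^sup>T Q\<close>; hence \<open>B = Q A P\<close> is tridiagonal with nonzero off-diagonal entries and
  \<open>A\<^sup>* = P diag(\<theta>\<^sup>*) Q\<close>.  Constant row sum \<open>\<theta>\<^sub>r\<close> means that the all-ones vector is a
  \<open>\<theta>\<^sub>r\<close>-eigenvector of \<open>B\<close>; completing it by eigenvectors for the other \<open>\<theta>\<^sub>t\<close> gives an
  invertible \<open>U\<close> with \<open>B U = U diag(\<theta>)\<close>.  Then \<open>E\<^sub>t = (P U) e\<^sub>t e\<^sub>t\<^sup>T (P U)\<^sup>-\<^sup>1\<close>, so everything is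
  governed by \<open>M = U\<^sup>-\<^sup>1 diag(\<theta>\<^sup>*) U\<close>: \<open>E\<^sub>r A\<^sup>* E\<^sub>t \<noteq> 0\<close> iff \<open>M\<^sub>r\<^sub>t \<noteq> 0\<close>, and \<open>a\<^sup>*\<^sub>r = M\<^sub>r\<^sub>r\<close>.  As
  \<open>\<theta>\<^sup>* = U M e\<^sub>r\<close>, condition (ii) says \<open>(\<theta>\<^sub>t - \<theta>\<^sub>s) M\<^sub>t\<^sub>r = 0\<close> for all \<open>t \<noteq> r\<close>.  A diagonal \<open>K\<close> with
  \<open>K B\<close> symmetric (it exists since the off-diagonal entries are nonzero) makes \<open>U\<^sup>T K U\<close> diagonal
  and nonsingular, whence \<open>M\<^sub>t\<^sub>r = 0\<close> iff \<open>M\<^sub>r\<^sub>t = 0\<close>.  Finally \<open>A\<^sup>*\<close> is scalar iff \<open>\<theta>\<^sup>*\<close> is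
  constant, which makes \<open>M\<close> scalar; conversely, if the column \<open>r\<close> of \<open>M\<close> is supported on \<open>{r}\<close>
  then \<open>\<theta>\<^sup>* = M\<^sub>r\<^sub>r 1\<close> is constant.
\<close>

lemma mat_nonzero_iff_entry:
  assumes "X \<in> carrier_mat n m"
  shows "X \<noteq> 0\<^sub>m n m \<longleftrightarrow> (\<exists>k<n. \<exists>l<m. X $$ (k,l) \<noteq> 0)"
  using assms by (auto intro!: eq_matI)

lemma vec_nonzero_iff_entry:
  assumes "v \<in> carrier_vec n"
  shows "v \<noteq> 0\<^sub>v n \<longleftrightarrow> (\<exists>k<n. v $ k \<noteq> 0)"
  using assms by (auto intro!: eq_vecI)

lemma obtain_inverse_mat:
  fixes P :: "'a::comm_ring_1 mat"
  assumes "P \<in> carrier_mat n n" "invertible_mat P"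
  obtains Q where "Q \<in> carrier_mat n n" "P * Q = 1\<^sub>m n" "Q * P = 1\<^sub>m n"
proof -
  obtain Q where Q: "P * Q = 1\<^sub>m (dim_row P)" "Q * P = 1\<^sub>m (dim_row Q)"
    using assms(2) unfolding invertible_mat_def inverts_mat_def by blast
  have "dim_row Q = n" "dim_col Q = n"
    using arg_cong[OF Q(1), of dim_col] arg_cong[OF Q(2), of dim_col] assms(1) by auto
  thus ?thesis using Q assms(1) that by auto
qed

lemma inverse_mat_entries:
  fixes X Y :: "'a::comm_ring_1 mat"
  assumes X: "X \<in> carrier_mat n n" and Y: "Y \<in> carrier_mat n n" and XY: "X * Y = 1\<^sub>m n"
    and i: "i < n" and j: "j < n"
  shows "(\<Sum>k=0..<n. X $$ (i,k) * Y $$ (k,j)) = (if i = j then 1 else 0)"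
proof -
  have "(X * Y) $$ (i,j) = (\<Sum>k=0..<n. X $$ (i,k) * Y $$ (k,j))"
    using X Y i j by (simp add: scalar_prod_def)
  thus ?thesis using XY i j by simp
qed

lemma triple_product_entry:
  fixes R Z C :: "'a::comm_ring_1 mat"
  assumes R: "R \<in> carrier_mat n n" and Z: "Z \<in> carrier_mat n n" and C: "C \<in> carrier_mat n n"
    and i: "i < n" and j: "j < n"
  shows "(R * Z * C) $$ (i,j) = (\<Sum>a=0..<n. \<Sum>b=0..<n. R $$ (i,a) * Z $$ (a,b) * C $$ (b,j))"
proof -
  have "(R * Z * C) $$ (i,j) = (\<Sum>b=0..<n. (\<Sum>a=0..<n. R $$ (i,a) * Z $$ (a,b)) * C $$ (b,j))"
    using R Z C i j by (simp add: scalar_prod_def del: assoc_mult_mat)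
  also have "\<dots> = (\<Sum>a=0..<n. \<Sum>b=0..<n. R $$ (i,a) * Z $$ (a,b) * C $$ (b,j))"
    by (simp add: sum_distrib_right) (rule sum.swap)
  finally show ?thesis .
qed

lemma diag_sandwich_entry:
  fixes R C :: "'a::comm_ring_1 mat"
  assumes R: "R \<in> carrier_mat n n" and C: "C \<in> carrier_mat n n" and i: "i < n" and j: "j < n"
  shows "(R * mat_diag n f * C) $$ (i,j) = (\<Sum>a=0..<n. R $$ (i,a) * f a * C $$ (a,j))"
  using R C i j by (simp add: mat_diag_mult_right[OF R] scalar_prod_def)

lemma rank_one_sandwich_entry:
  fixes X Z Y U V :: "'a::comm_ring_1 mat"
  assumes X: "X \<in> carrier_mat n n" and Z: "Z \<in> carrier_mat n n" and Y: "Y \<in> carrier_mat n n"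
    and U: "U \<in> carrier_mat n n" and V: "V \<in> carrier_mat n n"
    and Xe: "\<And>k a. k < n \<Longrightarrow> a < n \<Longrightarrow> X $$ (k,a) = U $$ (k,i) * V $$ (i,a)"
    and Ye: "\<And>b l. b < n \<Longrightarrow> l < n \<Longrightarrow> Y $$ (b,l) = U $$ (b,j) * V $$ (j,l)"
    and i: "i < n" and j: "j < n" and k: "k < n" and l: "l < n"
  shows "(X * Z * Y) $$ (k,l) = U $$ (k,i) * (V * Z * U) $$ (i,j) * V $$ (j,l)"
proof -
  have "(X * Z * Y) $$ (k,l) = (\<Sum>a=0..<n. \<Sum>b=0..<n. X $$ (k,a) * Z $$ (a,b) * Y $$ (b,l))"
    by (rule triple_product_entry[OF X Z Y k l])
  also have "\<dots> = (\<Sum>a=0..<n. \<Sum>b=0..<n. U $$ (k,i) * (V $$ (i,a) * Z $$ (a,b) * U $$ (b,j)) * V $$ (j,l))"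
    by (intro sum.cong refl) (simp add: Xe Ye k l mult_ac)
  also have "\<dots> = U $$ (k,i) * (V * Z * U) $$ (i,j) * V $$ (j,l)"
    by (simp add: triple_product_entry[OF V Z U i j] sum_distrib_left sum_distrib_right)
  finally show ?thesis .
qed

lemma rank_one_sandwich_nonzero:
  fixes X Z Y U V :: "'a::field mat"
  assumes X: "X \<in> carrier_mat n n" and Z: "Z \<in> carrier_mat n n" and Y: "Y \<in> carrier_mat n n"
    and U: "U \<in> carrier_mat n n" and V: "V \<in> carrier_mat n n" and VU: "V * U = 1\<^sub>m n"
    and Xe: "\<And>k a. k < n \<Longrightarrow> a < n \<Longrightarrow> X $$ (k,a) = U $$ (k,i) * V $$ (i,a)"
    and Ye: "\<And>b l. b < n \<Longrightarrow> l < n \<Longrightarrow> Y $$ (b,l) = U $$ (b,j) * V $$ (j,l)"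
    and i: "i < n" and j: "j < n"
  shows "X * Z * Y \<noteq> 0\<^sub>m n n \<longleftrightarrow> (V * Z * U) $$ (i,j) \<noteq> 0"
proof -
  have col_nz: "\<exists>k<n. U $$ (k,i) \<noteq> 0"
  proof (rule ccontr)
    assume "\<not> ?thesis"
    hence "(V * U) $$ (i,i) = 0" using U V i by (simp add: scalar_prod_def)
    thus False using VU i by simp
  qed
  have row_nz: "\<exists>l<n. V $$ (j,l) \<noteq> 0"
  proof (rule ccontr)
    assume "\<not> ?thesis"
    hence "(V * U) $$ (j,j) = 0" using U V j by (simp add: scalar_prod_def)
    thus False using VU j by simp
  qed
  have "X * Z * Y \<in> carrier_mat n n" using X Z Y by simp
  hence "X * Z * Y \<noteq> 0\<^sub>m n n \<longleftrightarrow>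
      (\<exists>k<n. \<exists>l<n. U $$ (k,i) * (V * Z * U) $$ (i,j) * V $$ (j,l) \<noteq> 0)"
    by (simp add: mat_nonzero_iff_entry rank_one_sandwich_entry[OF X Z Y U V Xe Ye i j]
        cong: conj_cong)
  thus ?thesis using col_nz row_nz by auto
qed

lemma rank_one_trace:
  fixes X Z U V :: "'a::comm_ring_1 mat"
  assumes X: "X \<in> carrier_mat n n" and Z: "Z \<in> carrier_mat n n"
    and U: "U \<in> carrier_mat n n" and V: "V \<in> carrier_mat n n"
    and Xe: "\<And>k a. k < n \<Longrightarrow> a < n \<Longrightarrow> X $$ (k,a) = U $$ (k,i) * V $$ (i,a)"
    and i: "i < n"
  shows "mat_trace (X * Z) = (V * Z * U) $$ (i,i)"
proof -
  have "mat_trace (X * Z) = (\<Sum>k=0..<n. \<Sum>a=0..<n. X $$ (k,a) * Z $$ (a,k))"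
    unfolding mat_trace_def using X Z by (simp add: scalar_prod_def atLeast0LessThan)
  also have "\<dots> = (\<Sum>k=0..<n. \<Sum>a=0..<n. V $$ (i,a) * Z $$ (a,k) * U $$ (k,i))"
    by (intro sum.cong refl) (simp add: Xe mult_ac)
  also have "\<dots> = (V * Z * U) $$ (i,i)"
    by (simp add: triple_product_entry[OF V Z U i i]) (rule sum.swap)
  finally show ?thesis .
qed

lemma sandwich_assoc:
  fixes A B X C D :: "'a::semiring_0 mat"
  assumes A: "A \<in> carrier_mat n n" and B: "B \<in> carrier_mat n n" and X: "X \<in> carrier_mat n n"
    and C: "C \<in> carrier_mat n n" and D: "D \<in> carrier_mat n n"
  shows "A * B * X * (C * D) = A * (B * X * C) * D"
proof -
  have ABX: "A * B * X \<in> carrier_mat n n" and BX: "B * X \<in> carrier_mat n n" using A B X by auto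
  have "A * B * X * (C * D) = A * B * X * C * D" using assoc_mult_mat[OF ABX C D] by simp
  also have "\<dots> = A * (B * X * C) * D"
    by (subst assoc_mult_mat[OF A B X], subst assoc_mult_mat[OF A BX C]) (rule refl)
  finally show ?thesis .
qed

lemma conjugate_cancel:
  fixes P Q X :: "'a::semiring_1 mat"
  assumes P: "P \<in> carrier_mat n n" and Q: "Q \<in> carrier_mat n n" and X: "X \<in> carrier_mat n n"
    and QP: "Q * P = 1\<^sub>m n"
  shows "Q * (P * X * Q) * P = X"
  using sandwich_assoc[OF Q P X Q P, symmetric] QP X by simp

lemma sum_unit_weight:
  fixes f g :: "nat \<Rightarrow> 'a::comm_ring_1"
  assumes "t < n"
  shows "(\<Sum>j=0..<n. f j * (if j = t then 1 else 0) * g j) = f t * g t"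
proof -
  have "(\<Sum>j=0..<n. f j * (if j = t then 1 else 0) * g j) = (\<Sum>j\<in>{0..<n}. if j = t then f t * g t else 0)"
    by (rule sum.cong) auto
  thus ?thesis using assms by simp
qed

lemma projector_times_basis:
  fixes X U :: "'a::comm_ring_1 mat"
  assumes X: "X \<in> carrier_mat n n" and U: "U \<in> carrier_mat n n"
    and proj: "\<And>j. j < n \<Longrightarrow> X *\<^sub>v col U j = (if j = t then col U t else 0\<^sub>v n)"
  shows "X * U = U * mat_diag n (\<lambda>j. if j = t then 1 else 0)"
proof (rule eq_matI)
  fix a j assume "a < dim_row (U * mat_diag n (\<lambda>j. if j = t then 1 else 0))"
    and "j < dim_col (U * mat_diag n (\<lambda>j. if j = t then 1 else 0))"
  hence a: "a < n" and j: "j < n" using U by (auto simp: mat_diag_def)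
  have "(X * U) $$ (a,j) = (X *\<^sub>v col U j) $ a" using X U a j by simp
  also have "\<dots> = (if j = t then U $$ (a,j) else 0)" using proj[OF j] U a j by auto
  finally show "(X * U) $$ (a,j) = (U * mat_diag n (\<lambda>j. if j = t then 1 else 0)) $$ (a,j)"
    using U a j by (simp add: mat_diag_mult_right[OF U])
qed (use X U in \<open>auto simp: mat_diag_def\<close>)

lemma projector_entries:
  fixes X U V :: "'a::comm_ring_1 mat"
  assumes X: "X \<in> carrier_mat n n" and U: "U \<in> carrier_mat n n" and V: "V \<in> carrier_mat n n"
    and UV: "U * V = 1\<^sub>m n"
    and proj: "\<And>j. j < n \<Longrightarrow> X *\<^sub>v col U j = (if j = t then col U t else 0\<^sub>v n)"
    and t: "t < n" and a: "a < n" and b: "b < n"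
  shows "X $$ (a,b) = U $$ (a,t) * V $$ (t,b)"
proof -
  have "X = X * (U * V)" using X UV by simp
  also have "\<dots> = U * mat_diag n (\<lambda>j. if j = t then 1 else 0) * V"
    using X U V by (simp add: projector_times_basis[OF X U proj, symmetric])
  finally have "X $$ (a,b) = (U * mat_diag n (\<lambda>j. if j = t then 1 else 0) * V) $$ (a,b)"
    by simp
  thus ?thesis using diag_sandwich_entry[OF U V a b] sum_unit_weight[OF t] by simp
qed

section \<open>Primitive idempotents and eigenbases\<close>

lemma shifted_matrix_on_eigenvector:
  fixes A :: "'a::field mat"
  assumes A: "A \<in> carrier_mat n n" and v: "v \<in> carrier_vec n" and Av: "A *\<^sub>v v = \<mu> \<cdot>\<^sub>v v"
  shows "(c \<cdot>\<^sub>m (A - b \<cdot>\<^sub>m 1\<^sub>m n)) *\<^sub>v v = (c * (\<mu> - b)) \<cdot>\<^sub>v v"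
proof -
  have "(b \<cdot>\<^sub>m 1\<^sub>m n) *\<^sub>v v = b \<cdot>\<^sub>v v"
    using v by (intro eq_vecI) (auto simp: row_smult)
  hence shift: "(A - b \<cdot>\<^sub>m 1\<^sub>m n) *\<^sub>v v = \<mu> \<cdot>\<^sub>v v - b \<cdot>\<^sub>v v"
    using A v by (simp add: minus_mult_distrib_mat_vec Av)
  have "(c \<cdot>\<^sub>m (A - b \<cdot>\<^sub>m 1\<^sub>m n)) *\<^sub>v v = c \<cdot>\<^sub>v ((A - b \<cdot>\<^sub>m 1\<^sub>m n) *\<^sub>v v)"
    using A v by (intro eq_vecI) (auto simp: row_smult)
  also have "\<dots> = (c * (\<mu> - b)) \<cdot>\<^sub>v v"
    unfolding shift using v by (intro eq_vecI) (auto simp: algebra_simps)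
  finally show ?thesis .
qed

lemma prim_idem_factors_on_eigenvector:
  fixes A :: "'a::field mat" and th :: "nat \<Rightarrow> 'a" and d t :: nat
  defines "F \<equiv> \<lambda>k M. ((1 / (th t - th k)) \<cdot>\<^sub>m (A - th k \<cdot>\<^sub>m 1\<^sub>m (d+1))) * M"
  assumes A: "A \<in> carrier_mat (Suc d) (Suc d)" and v: "v \<in> carrier_vec (Suc d)"
    and Av: "A *\<^sub>v v = \<mu> \<cdot>\<^sub>v v"
  shows "foldr F L (1\<^sub>m (d+1)) \<in> carrier_mat (Suc d) (Suc d)
    \<and> foldr F L (1\<^sub>m (d+1)) *\<^sub>v v = (\<Prod>k\<leftarrow>L. (\<mu> - th k) / (th t - th k)) \<cdot>\<^sub>v v"
proof (induction L)
  case Nil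
  then show ?case using v by auto
next
  case (Cons k L)
  let ?G = "(1 / (th t - th k)) \<cdot>\<^sub>m (A - th k \<cdot>\<^sub>m 1\<^sub>m (d+1))"
  let ?p = "\<Prod>k\<leftarrow>L. (\<mu> - th k) / (th t - th k)"
  have G: "?G \<in> carrier_mat (Suc d) (Suc d)" using A by auto
  have "(?G * foldr F L (1\<^sub>m (d+1))) *\<^sub>v v = ?G *\<^sub>v (?p \<cdot>\<^sub>v v)"
    using assoc_mult_mat_vec[OF G conjunct1[OF Cons.IH] v] Cons.IH by simp
  also have "\<dots> = ?p \<cdot>\<^sub>v (?G *\<^sub>v v)" using G v by (rule mult_mat_vec)
  also have "\<dots> = ((\<mu> - th k) / (th t - th k) * ?p) \<cdot>\<^sub>v v"
    by (simp add: shifted_matrix_on_eigenvector[OF _ v Av] A smult_smult_assoc mult.commute)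
  finally show ?case using G Cons.IH by (simp add: F_def)
qed

lemma prim_idem_carrier:
  fixes A :: "'a::field mat"
  assumes A: "A \<in> carrier_mat (Suc d) (Suc d)"
  shows "prim_idem d A th t \<in> carrier_mat (Suc d) (Suc d)"
proof -
  have "foldr (\<lambda>k M. ((1 / (th t - th k)) \<cdot>\<^sub>m (A - th k \<cdot>\<^sub>m 1\<^sub>m (d+1))) * M) L (1\<^sub>m (d+1))
      \<in> carrier_mat (Suc d) (Suc d)" for L
    by (induction L) (use A in auto)
  thus ?thesis unfolding prim_idem_def .
qed

lemma prim_idem_on_eigenvector:
  fixes A :: "'a::field mat"
  assumes A: "A \<in> carrier_mat (Suc d) (Suc d)" and v: "v \<in> carrier_vec (Suc d)"
    and Av: "A *\<^sub>v v = th j \<cdot>\<^sub>v v" and j: "j \<le> d" and t: "t \<le> d"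
    and inj: "inj_on th {0..d}"
  shows "prim_idem d A th t *\<^sub>v v = (if j = t then v else 0\<^sub>v (Suc d))"
proof -
  let ?L = "filter (\<lambda>k. k \<noteq> t) [0..<d+1]"
  let ?p = "\<Prod>k\<leftarrow>?L. (th j - th k) / (th t - th k)"
  have act: "prim_idem d A th t *\<^sub>v v = ?p \<cdot>\<^sub>v v"
    using prim_idem_factors_on_eigenvector[OF A v Av, where t = t and L = ?L] unfolding prim_idem_def by simp
  show ?thesis
  proof (cases "j = t")
    case True
    have "th t \<noteq> th k" if "k \<in> set ?L" for k
      using that inj t unfolding inj_on_def by (auto simp del: upt_Suc)
    hence "(\<Prod>k\<in>set ?L. (th j - th k) / (th t - th k)) = 1" using True by (intro prod.neutral) simp
    moreover have "distinct ?L" by simp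
    ultimately show ?thesis using act True by (simp only: prod.distinct_set_conv_list) simp
  next
    case False
    hence "j \<in> set ?L" using j by (auto simp del: upt_Suc)
    hence "?p = 0" by (force simp: prod_list_zero_iff)
    thus ?thesis using act False v by auto
  qed
qed

lemma prim_idem_on_eigenvector_columns:
  fixes A U :: "'a::field mat"
  assumes A: "A \<in> carrier_mat (Suc d) (Suc d)" and U: "U \<in> carrier_mat (Suc d) (Suc d)"
    and inj: "inj_on th {0..d}"
    and eig: "\<And>j. j \<le> d \<Longrightarrow> A *\<^sub>v col U j = th j \<cdot>\<^sub>v col U j"
    and t: "t \<le> d" and j: "j < Suc d"
  shows "prim_idem d A th t *\<^sub>v col U j = (if j = t then col U t else 0\<^sub>v (Suc d))"
  using prim_idem_on_eigenvector[OF A _ eig _ t inj, of j] U j by auto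

text \<open>Eigenvectors for distinct eigenvalues are independent: the columns of \<open>U\<close> are separated
  by the primitive idempotents, so \<open>U\<close> is invertible.\<close>
lemma eigenvector_matrix_invertible:
  fixes A U :: "'a::field mat"
  assumes A: "A \<in> carrier_mat (Suc d) (Suc d)" and U: "U \<in> carrier_mat (Suc d) (Suc d)"
    and inj: "inj_on th {0..d}"
    and eig: "\<And>j. j \<le> d \<Longrightarrow> A *\<^sub>v col U j = th j \<cdot>\<^sub>v col U j"
    and nz: "\<And>j. j \<le> d \<Longrightarrow> col U j \<noteq> 0\<^sub>v (Suc d)"
  obtains V where "V \<in> carrier_mat (Suc d) (Suc d)" "U * V = 1\<^sub>m (Suc d)" "V * U = 1\<^sub>m (Suc d)"
proof -
  let ?n = "Suc d"
  have "det U \<noteq> 0"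
  proof
    assume "det U = 0"
    then obtain c where c: "c \<in> carrier_vec ?n" "c \<noteq> 0\<^sub>v ?n" "U *\<^sub>v c = 0\<^sub>v ?n"
      using det_0_iff_vec_prod_zero_field[OF U] by blast
    have "c $ t = 0" if t: "t \<le> d" for t
    proof -
      let ?E = "prim_idem d A th t"
      have E: "?E \<in> carrier_mat ?n ?n" using prim_idem_carrier[OF A] .
      have "c $ t \<cdot>\<^sub>v col U t = (U * mat_diag ?n (\<lambda>j. if j = t then 1 else 0)) *\<^sub>v c"
        using U c(1) t sum_unit_weight[of t ?n "\<lambda>j. U $$ (_,j)" "\<lambda>j. c $ j"]
        by (intro eq_vecI) (auto simp: mat_diag_mult_right[OF U] scalar_prod_def mult.commute)
      also have "\<dots> = ?E *\<^sub>v (U *\<^sub>v c)"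
        using E U c(1) prim_idem_on_eigenvector_columns[OF A U inj eig t]
        by (simp add: projector_times_basis[OF E U, symmetric] assoc_mult_mat_vec)
      also have "\<dots> = 0\<^sub>v ?n" using E c(3) by (intro eq_vecI) auto
      finally have zero: "c $ t \<cdot>\<^sub>v col U t = 0\<^sub>v ?n" .
      obtain k where k: "k < ?n" "col U t $ k \<noteq> 0"
        using nz[OF t] vec_nonzero_iff_entry[OF col_carrier_vec[OF _ U]] t by auto
      have "c $ t * col U t $ k = (c $ t \<cdot>\<^sub>v col U t) $ k" using k U by simp
      also have "\<dots> = 0" using zero k by simp
      finally show "c $ t = 0" using k(2) by simp
    qed
    hence "c = 0\<^sub>v ?n" using c(1) by (intro eq_vecI) auto
    thus False using c(2) by simp
  qed
  from det_non_zero_imp_unit[OF U this, of "()"] show ?thesis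
    using that unfolding Units_def ring_mat_simps by auto
qed

section \<open>Tridiagonal matrices\<close>

lemma tridiagonal_row_expansion:
  fixes B :: "'a::field mat"
  assumes tri: "\<And>j. j \<le> d \<Longrightarrow> j > i + 1 \<or> i > j + 1 \<Longrightarrow> B $$ (i,j) = 0" and i: "i \<le> d"
  shows "(\<Sum>j=0..<Suc d. B $$ (i,j) * f j)
    = coef_c B i * f (i - 1) + coef_a B i * f i + coef_b d B i * f (i + 1)"
proof -
  have entry: "B $$ (i,j) * f j = (if j = i - 1 then coef_c B i * f (i - 1) else 0)
      + (if j = i then coef_a B i * f i else 0) + (if j = i + 1 then coef_b d B i * f (i + 1) else 0)"
    if j: "j < Suc d" for j
  proof -
    consider "0 < i" "j = i - 1" | "j = i" | "j = i + 1" | "j > i + 1 \<or> i > j + 1" by linarith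
    thus ?thesis
      by cases (use tri j i in \<open>auto simp: coef_a_def coef_b_def coef_c_def\<close>)
  qed
  have "(\<Sum>j=0..<Suc d. B $$ (i,j) * f j) = (\<Sum>j=0..<Suc d. (if j = i - 1 then coef_c B i * f (i - 1) else 0)
      + (if j = i then coef_a B i * f i else 0) + (if j = i + 1 then coef_b d B i * f (i + 1) else 0))"
    by (rule sum.cong[OF refl]) (simp add: entry)
  also have "\<dots> = coef_c B i * f (i - 1) + coef_a B i * f i + coef_b d B i * f (i + 1)"
    using i by (simp only: sum.distrib sum.delta[OF finite_atLeastLessThan]) (auto simp: coef_b_def)
  finally show ?thesis .
qed

text \<open>The diagonal symmetrizer of a tridiagonal matrix: \<open>K\<^sub>0 = 1\<close>,
  \<open>K\<^sub>i\<^sub>+\<^sub>1 = K\<^sub>i b\<^sub>i / c\<^sub>i\<^sub>+\<^sub>1\<close>, so that \<open>K B\<close> is symmetric.\<close>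
definition symmetrizer :: "'a::field mat \<Rightarrow> nat \<Rightarrow> 'a" where
  "symmetrizer B = rec_nat 1 (\<lambda>i k. k * B $$ (i, Suc i) / B $$ (Suc i, i))"

lemma symmetrizer_simps:
  "symmetrizer B 0 = 1"
  "symmetrizer B (Suc i) = symmetrizer B i * B $$ (i, Suc i) / B $$ (Suc i, i)"
  unfolding symmetrizer_def by simp_all

lemma symmetrizer_nonzero:
  assumes up: "\<And>i. i < d \<Longrightarrow> B $$ (i, Suc i) \<noteq> 0" and down: "\<And>i. i < d \<Longrightarrow> B $$ (Suc i, i) \<noteq> 0"
    and i: "i \<le> d"
  shows "symmetrizer B i \<noteq> 0"
  using i by (induction i) (auto simp: symmetrizer_simps up down)

lemma symmetrizer_sym:
  assumes tri: "\<And>i j. i \<le> d \<Longrightarrow> j \<le> d \<Longrightarrow> j > i + 1 \<or> i > j + 1 \<Longrightarrow> B $$ (i,j) = 0"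
    and down: "\<And>i. i < d \<Longrightarrow> B $$ (Suc i, i) \<noteq> 0"
    and i: "i \<le> d" and j: "j \<le> d"
  shows "B $$ (j,i) * symmetrizer B j = symmetrizer B i * B $$ (i,j)"
proof -
  consider "j = i" | "j = Suc i" | "i = Suc j" | "j > i + 1 \<or> i > j + 1" by linarith
  thus ?thesis
  proof cases
    case 2 thus ?thesis using down[of i] j by (simp add: symmetrizer_simps field_simps)
  next
    case 3 thus ?thesis using down[of j] i by (simp add: symmetrizer_simps field_simps)
  next
    case 4 thus ?thesis using tri[OF i j] tri[OF j i] by auto
  qed simp
qed

section \<open>The proposition in eigenbasis coordinates\<close>

text \<open>The matrix \<open>b\<close> is symmetrized by the nonsingular diagonal \<open>K\<close>, the columns of \<open>U\<close> are
  eigenvectors of \<open>b\<close> for the distinct eigenvalues \<open>\<theta>\<^sub>t\<close>, \<open>V = U\<^sup>-\<^sup>1\<close>, and the \<open>r\<close>-th column of \<open>U\<close>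
  is the all-ones vector.  \<open>M = V diag(\<theta>\<^sup>*) U\<close> represents the diagonal matrix \<open>diag(\<theta>\<^sup>*)\<close>
  in this eigenbasis.\<close>
locale symmetrizable_eigenbasis =
  fixes n :: nat and b U V :: "nat \<Rightarrow> nat \<Rightarrow> 'a::field" and K th ths :: "nat \<Rightarrow> 'a" and r :: nat
  assumes UV: "\<And>i j. i < n \<Longrightarrow> j < n \<Longrightarrow> (\<Sum>k=0..<n. U i k * V k j) = (if i = j then 1 else 0)"
    and VU: "\<And>i j. i < n \<Longrightarrow> j < n \<Longrightarrow> (\<Sum>k=0..<n. V i k * U k j) = (if i = j then 1 else 0)"
    and eig: "\<And>k a. k < n \<Longrightarrow> a < n \<Longrightarrow> (\<Sum>m=0..<n. b k m * U m a) = th a * U k a"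
    and U_col_r: "\<And>k. k < n \<Longrightarrow> U k r = 1"
    and r_lt: "r < n"
    and K_sym: "\<And>i j. i < n \<Longrightarrow> j < n \<Longrightarrow> b j i * K j = K i * b i j"
    and K_nz: "\<And>i. i < n \<Longrightarrow> K i \<noteq> 0"
    and th_inj: "inj_on th {0..<n}"
begin

definition M :: "nat \<Rightarrow> nat \<Rightarrow> 'a" where
  "M t j = (\<Sum>k=0..<n. V t k * ths k * U k j)"

text \<open>Since \<open>\<theta>\<^sup>* = diag(\<theta>\<^sup>*) 1 = U M e\<^sub>r\<close>, the coordinates of \<open>\<theta>\<^sup>*\<close> in the eigenbasis form the column
  \<open>r\<close> of \<open>M\<close>.\<close>
lemma ths_expansion:
  assumes i: "i < n"
  shows "ths i = (\<Sum>t=0..<n. U i t * M t r)"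
proof -
  have "(\<Sum>t=0..<n. U i t * M t r) = (\<Sum>t=0..<n. \<Sum>k=0..<n. U i t * V t k * (ths k * U k r))"
    unfolding M_def by (simp add: sum_distrib_left mult.assoc)
  also have "\<dots> = (\<Sum>k=0..<n. (\<Sum>t=0..<n. U i t * V t k) * (ths k * U k r))"
    by (subst sum.swap) (simp add: sum_distrib_right)
  also have "\<dots> = (\<Sum>k=0..<n. if k = i then ths i else 0)"
    by (rule sum.cong) (use UV i U_col_r in auto)
  also have "\<dots> = ths i" using i by simp
  finally show ?thesis by simp
qed

lemma U_coefficients_unique:
  assumes "\<And>i. i < n \<Longrightarrow> (\<Sum>t=0..<n. U i t * g t) = 0" and j: "j < n"
  shows "g j = 0"
proof -
  have "0 = (\<Sum>i=0..<n. V j i * (\<Sum>t=0..<n. U i t * g t))" using assms by simp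
  also have "\<dots> = (\<Sum>t=0..<n. (\<Sum>i=0..<n. V j i * U i t) * g t)"
    by (simp add: sum_distrib_left sum_distrib_right mult.assoc) (rule sum.swap)
  also have "\<dots> = (\<Sum>t=0..<n. if t = j then g j else 0)" by (rule sum.cong) (use VU j in auto)
  also have "\<dots> = g j" using j by simp
  finally show ?thesis by simp
qed

lemma b_times_ths:
  assumes i: "i < n"
  shows "(\<Sum>j=0..<n. b i j * ths j) = (\<Sum>t=0..<n. th t * U i t * M t r)"
proof -
  have "(\<Sum>j=0..<n. b i j * ths j) = (\<Sum>j=0..<n. \<Sum>t=0..<n. b i j * U j t * M t r)"
    by (rule sum.cong) (auto simp: ths_expansion sum_distrib_left mult.assoc)
  also have "\<dots> = (\<Sum>t=0..<n. (\<Sum>j=0..<n. b i j * U j t) * M t r)"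
    by (subst sum.swap) (simp add: sum_distrib_right)
  also have "\<dots> = (\<Sum>t=0..<n. th t * U i t * M t r)" by (rule sum.cong) (use eig i in auto)
  finally show ?thesis .
qed

text \<open>The eigenvalue-type equation for \<open>\<theta>\<^sup>*\<close> is equivalent to the vanishing of the entries
  \<open>M t r\<close> for \<open>t \<notin> {r, s}\<close>: in the eigenbasis, its \<open>t\<close>-th coordinate is \<open>(\<theta>\<^sub>t - \<theta>\<^sub>s) M t r\<close>.\<close>
lemma eigen_equation_iff:
  assumes s: "s < n"
  shows "(\<forall>i<n. (\<Sum>j=0..<n. b i j * ths j) - th r * ths i = (th s - th r) * (ths i - M r r))
     \<longleftrightarrow> (\<forall>t<n. t \<noteq> r \<longrightarrow> t \<noteq> s \<longrightarrow> M t r = 0)"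
proof -
  define g where "g t = (th t - th r) * M t r - (th s - th r) * (M t r - (if t = r then M r r else 0))" for t
  have coords: "(\<Sum>j=0..<n. b i j * ths j) - th r * ths i - (th s - th r) * (ths i - M r r)
      = (\<Sum>t=0..<n. U i t * g t)" if i: "i < n" for i
  proof -
    have unit: "M r r = (\<Sum>t=0..<n. U i t * (if t = r then M r r else 0))"
      using U_col_r i r_lt by (simp add: if_distrib cong: if_cong)
    have "(\<Sum>t=0..<n. U i t * g t) = (\<Sum>t=0..<n. th t * U i t * M t r) - th r * (\<Sum>t=0..<n. U i t * M t r)
        - (th s - th r) * ((\<Sum>t=0..<n. U i t * M t r) - (\<Sum>t=0..<n. U i t * (if t = r then M r r else 0)))"
    proof -
      have "U i t * g t = th t * U i t * M t r - th r * (U i t * M t r)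
          - (th s - th r) * (U i t * M t r - U i t * (if t = r then M r r else 0))" for t
        by (simp add: g_def algebra_simps)
      thus ?thesis by (simp only: sum_subtractf sum_distrib_left[symmetric])
    qed
    thus ?thesis using b_times_ths[OF i] ths_expansion[OF i] unit by simp
  qed
  have g_zero_iff: "g t = 0 \<longleftrightarrow> (t \<noteq> r \<longrightarrow> t \<noteq> s \<longrightarrow> M t r = 0)" if t: "t < n" for t
  proof (cases "t = r")
    case False
    hence "g t = (th t - th s) * M t r" by (simp add: g_def algebra_simps)
    moreover have "t \<noteq> s \<Longrightarrow> th t \<noteq> th s" using th_inj t s unfolding inj_on_def by auto
    ultimately show ?thesis using False by auto
  qed (simp add: g_def)
  have "(\<Sum>j=0..<n. b i j * ths j) - th r * ths i = (th s - th r) * (ths i - M r r)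
      \<longleftrightarrow> (\<Sum>t=0..<n. U i t * g t) = 0" if i: "i < n" for i
    unfolding eq_iff_diff_eq_0[of "(\<Sum>j=0..<n. b i j * ths j) - th r * ths i"] coords[OF i] ..
  hence "(\<forall>i<n. (\<Sum>j=0..<n. b i j * ths j) - th r * ths i = (th s - th r) * (ths i - M r r))
      \<longleftrightarrow> (\<forall>i<n. (\<Sum>t=0..<n. U i t * g t) = 0)"
    by blast
  also have "\<dots> \<longleftrightarrow> (\<forall>t<n. g t = 0)"
  proof
    assume "\<forall>i<n. (\<Sum>t=0..<n. U i t * g t) = 0"
    thus "\<forall>t<n. g t = 0" using U_coefficients_unique[of g] by blast
  qed simp
  finally show ?thesis using g_zero_iff by auto
qed

definition gram :: "nat \<Rightarrow> nat \<Rightarrow> 'a" where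
  "gram a c = (\<Sum>k=0..<n. U k a * K k * U k c)"

text \<open>Since \<open>K b\<close> is symmetric, eigenvectors for distinct eigenvalues are \<open>K\<close>-orthogonal.\<close>
lemma gram_offdiag:
  assumes a: "a < n" and c: "c < n" and ac: "a \<noteq> c"
  shows "gram a c = 0"
proof -
  have "th a * gram a c = (\<Sum>k=0..<n. (\<Sum>m=0..<n. b k m * U m a) * K k * U k c)"
    unfolding gram_def sum_distrib_left by (rule sum.cong) (use eig a in auto)
  also have "\<dots> = (\<Sum>k=0..<n. \<Sum>m=0..<n. U m a * (b k m * K k) * U k c)"
    by (intro sum.cong refl) (simp add: sum_distrib_left sum_distrib_right mult_ac)
  also have "\<dots> = (\<Sum>m=0..<n. \<Sum>k=0..<n. U m a * (b k m * K k) * U k c)"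
    by (rule sum.swap)
  also have "\<dots> = (\<Sum>m=0..<n. U m a * K m * (\<Sum>k=0..<n. b m k * U k c))"
    unfolding sum_distrib_left by (intro sum.cong refl) (use K_sym in \<open>auto simp: algebra_simps\<close>)
  also have "\<dots> = (\<Sum>m=0..<n. U m a * K m * (th c * U m c))"
    by (rule sum.cong) (use eig c in auto)
  also have "\<dots> = th c * gram a c"
    unfolding gram_def sum_distrib_left by (simp add: algebra_simps)
  finally have "(th a - th c) * gram a c = 0" by (simp add: algebra_simps)
  moreover have "th a \<noteq> th c" using th_inj a c ac unfolding inj_on_def by auto
  ultimately show ?thesis by simp
qed

text \<open>The Gram matrix is nonsingular, so its diagonal entries do not vanish.\<close>
lemma gram_diag_nonzero:
  assumes a: "a < n"
  shows "gram a a \<noteq> 0"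
proof
  assume z: "gram a a = 0"
  have row_zero: "(\<Sum>k=0..<n. (U k a * K k) * U k c) = 0" if c: "c < n" for c
    using gram_offdiag[OF a c] z unfolding gram_def by (cases "a = c") (auto simp: mult.assoc)
  have "U j a * K j = 0" if j: "j < n" for j
  proof -
    have "U j a * K j = (\<Sum>k=0..<n. (U k a * K k) * (\<Sum>c=0..<n. U k c * V c j))"
      by (simp add: UV j if_distrib cong: if_cong)
    also have "\<dots> = (\<Sum>c=0..<n. (\<Sum>k=0..<n. (U k a * K k) * U k c) * V c j)"
      by (simp add: sum_distrib_left sum_distrib_right mult.assoc) (rule sum.swap)
    also have "\<dots> = 0" using row_zero by simp
    finally show ?thesis .
  qed
  hence "(\<Sum>k=0..<n. V a k * U k a) = 0" by (intro sum.neutral) (use K_nz in auto)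
  thus False using VU[OF a a] by simp
qed

text \<open>\<open>gram a a * M a c\<close> is the \<open>(a,c)\<close>-entry of the symmetric matrix \<open>U\<^sup>T K diag(\<theta>\<^sup>*) U\<close>.\<close>
lemma gram_times_M:
  assumes a: "a < n" and c: "c < n"
  shows "gram a a * M a c = (\<Sum>k=0..<n. U k a * K k * ths k * U k c)"
proof -
  have "(\<Sum>e=0..<n. gram a e * M e c) = (\<Sum>e\<in>{0..<n}. if e = a then gram a a * M a c else 0)"
    by (rule sum.cong) (use gram_offdiag a in auto)
  hence "gram a a * M a c = (\<Sum>e=0..<n. gram a e * M e c)" using a by simp
  also have "\<dots> = (\<Sum>e=0..<n. \<Sum>k=0..<n. \<Sum>l=0..<n. (U k a * K k) * (U k e * V e l) * (ths l * U l c))"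
    unfolding gram_def M_def sum_product by (intro sum.cong refl) (simp add: mult_ac)
  also have "\<dots> = (\<Sum>k=0..<n. \<Sum>l=0..<n. \<Sum>e=0..<n. (U k a * K k) * (U k e * V e l) * (ths l * U l c))"
    by (subst sum.swap) (intro sum.cong refl sum.swap)
  also have "\<dots> = (\<Sum>k=0..<n. \<Sum>l=0..<n. (U k a * K k) * (\<Sum>e=0..<n. U k e * V e l) * (ths l * U l c))"
    by (simp add: sum_distrib_left sum_distrib_right)
  also have "\<dots> = (\<Sum>k=0..<n. \<Sum>l=0..<n. if l = k then (U k a * K k) * (ths k * U k c) else 0)"
    by (intro sum.cong refl) (use UV in auto)
  also have "\<dots> = (\<Sum>k=0..<n. U k a * K k * ths k * U k c)"
    by (intro sum.cong refl) (auto simp: mult.assoc)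
  finally show ?thesis .
qed

lemma M_zero_sym:
  assumes a: "a < n" and c: "c < n"
  shows "M a c = 0 \<longleftrightarrow> M c a = 0"
proof -
  have "gram a a * M a c = gram c c * M c a"
    unfolding gram_times_M[OF a c] gram_times_M[OF c a] by (rule sum.cong) (auto simp: algebra_simps)
  thus ?thesis using gram_diag_nonzero[OF a] gram_diag_nonzero[OF c] by auto
qed

lemma M_of_constant:
  assumes const: "\<And>i. i < n \<Longrightarrow> ths i = c" and a: "a < n" and e: "e < n"
  shows "M a e = (if a = e then c else 0)"
proof -
  have "M a e = c * (\<Sum>k=0..<n. V a k * U k e)"
    unfolding M_def sum_distrib_left by (rule sum.cong) (use const in auto)
  thus ?thesis using VU[OF a e] by simp
qed

lemma constant_of_M_column:
  assumes col: "\<And>t. t < n \<Longrightarrow> t \<noteq> r \<Longrightarrow> M t r = 0" and i: "i < n"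
  shows "ths i = M r r"
proof -
  have "ths i = (\<Sum>t=0..<n. if t = r then M r r else 0)"
    unfolding ths_expansion[OF i] by (rule sum.cong) (use col U_col_r i in auto)
  thus ?thesis using r_lt by simp
qed

lemma single_neighbour_iff:
  assumes s: "s < n" and sr: "s \<noteq> r"
  shows "(M r s \<noteq> 0 \<and> (\<forall>t<n. t \<noteq> r \<longrightarrow> t \<noteq> s \<longrightarrow> M r t = 0))
     \<longleftrightarrow> ((\<forall>t<n. t \<noteq> r \<longrightarrow> t \<noteq> s \<longrightarrow> M t r = 0) \<and> \<not> (\<exists>c. \<forall>i<n. ths i = c))"
proof -
  have sym: "M r t = 0 \<longleftrightarrow> M t r = 0" if "t < n" for t using M_zero_sym[OF r_lt that] .
  have "M r s \<noteq> 0 \<longleftrightarrow> \<not> (\<exists>c. \<forall>i<n. ths i = c)"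
    if off: "\<forall>t<n. t \<noteq> r \<longrightarrow> t \<noteq> s \<longrightarrow> M t r = 0"
  proof
    assume "M r s \<noteq> 0"
    thus "\<not> (\<exists>c. \<forall>i<n. ths i = c)" using M_of_constant[OF _ r_lt s] sr by auto
  next
    assume "\<not> (\<exists>c. \<forall>i<n. ths i = c)"
    thus "M r s \<noteq> 0" using constant_of_M_column off sym[OF s] by blast
  qed
  thus ?thesis using sym by blast
qed

end

section \<open>Reduction of the hypotheses to eigenbasis coordinates\<close>

locale feasible_representation =
  fixes d :: nat and Es :: "nat \<Rightarrow> 'a::field mat" and A :: "'a mat" and th ths :: "nat \<Rightarrow> 'a"
    and P B :: "'a mat" and r :: nat
  assumes Es_carrier: "\<And>i. i \<le> d \<Longrightarrow> Es i \<in> carrier_mat (d+1) (d+1)"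
    and Es_orth: "\<And>i j. i \<le> d \<Longrightarrow> j \<le> d \<Longrightarrow> Es i * Es j = (if i = j then Es i else 0\<^sub>m (d+1) (d+1))"
    and A_carrier: "A \<in> carrier_mat (d+1) (d+1)"
    and A_far: "\<And>i j. i \<le> d \<Longrightarrow> j \<le> d \<Longrightarrow> j > i + 1 \<or> i > j + 1 \<Longrightarrow> Es i * A * Es j = 0\<^sub>m (d+1) (d+1)"
    and A_near: "\<And>i j. i \<le> d \<Longrightarrow> j \<le> d \<Longrightarrow> j = i + 1 \<or> i = j + 1 \<Longrightarrow> Es i * A * Es j \<noteq> 0\<^sub>m (d+1) (d+1)"
    and th_distinct: "inj_on th {0..d}"
    and th_eig: "\<And>i. i \<le> d \<Longrightarrow> eigenvalue A (th i)"
    and P_carrier: "P \<in> carrier_mat (d+1) (d+1)"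
    and P_basis: "invertible_mat P"
    and P_feasible: "\<And>i. i \<le> d \<Longrightarrow> \<exists>w \<in> carrier_vec (d+1). col P i = Es i *\<^sub>v w"
    and B_carrier: "B \<in> carrier_mat (d+1) (d+1)"
    and B_repr: "A * P = P * B"
    and r: "r \<le> d"
    and row_sum: "\<And>i. i \<le> d \<Longrightarrow> coef_c B i + coef_a B i + coef_b d B i = th r"
begin

abbreviation (input) n where "n \<equiv> Suc d"

lemma A_car: "A \<in> carrier_mat n n" and P_car: "P \<in> carrier_mat n n" and B_car: "B \<in> carrier_mat n n"
  using A_carrier P_carrier B_carrier by simp_all

definition Q :: "'a mat" where
  "Q = (SOME Q. Q \<in> carrier_mat n n \<and> P * Q = 1\<^sub>m n \<and> Q * P = 1\<^sub>m n)"

lemma Q_inverse: "Q \<in> carrier_mat n n" "P * Q = 1\<^sub>m n" "Q * P = 1\<^sub>m n"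
proof -
  obtain Q' where "Q' \<in> carrier_mat n n" "P * Q' = 1\<^sub>m n" "Q' * P = 1\<^sub>m n"
    using obtain_inverse_mat[OF P_car P_basis] .
  hence "Q \<in> carrier_mat n n \<and> P * Q = 1\<^sub>m n \<and> Q * P = 1\<^sub>m n"
    unfolding Q_def using someI[of "\<lambda>Q. Q \<in> carrier_mat n n \<and> P * Q = 1\<^sub>m n \<and> Q * P = 1\<^sub>m n" Q']
    by blast
  thus "Q \<in> carrier_mat n n" "P * Q = 1\<^sub>m n" "Q * P = 1\<^sub>m n" by auto
qed

text \<open>Feasibility forces \<open>E\<^sup>*\<^sub>i = P e\<^sub>i e\<^sub>i\<^sup>T P\<^sup>-\<^sup>1\<close>: \<open>E\<^sup>*\<^sub>i\<close> fixes the \<open>i\<close>-th basis vector and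
  kills the others.\<close>
lemma Es_entry:
  assumes i: "i \<le> d" and k: "k < n" and l: "l < n"
  shows "Es i $$ (k,l) = P $$ (k,i) * Q $$ (i,l)"
proof (rule projector_entries[OF _ P_car Q_inverse(1) Q_inverse(2) _ _ k l])
  show "Es i \<in> carrier_mat n n" using Es_carrier[OF i] by simp
  fix j assume j: "j < n"
  then obtain w where w: "w \<in> carrier_vec n" "col P j = Es j *\<^sub>v w" using P_feasible[of j] by auto
  have "Es i *\<^sub>v col P j = (Es i * Es j) *\<^sub>v w"
    using w Es_carrier[OF i] Es_carrier[of j] j by simp
  thus "Es i *\<^sub>v col P j = (if j = i then col P i else 0\<^sub>v n)"
    using Es_orth[OF i, of j] w j by (auto intro!: eq_vecI)
next
  show "i < n" using i by simp
qed

lemma B_eq: "B = Q * A * P"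
proof -
  have "Q * A * P = Q * (P * B)" using Q_inverse(1) A_car P_car B_repr by simp
  also have "\<dots> = B" using Q_inverse P_car B_car by (simp flip: assoc_mult_mat[OF Q_inverse(1) P_car B_car])
  finally show ?thesis by simp
qed

lemma Es_A_Es_nonzero_iff:
  assumes i: "i \<le> d" and j: "j \<le> d"
  shows "Es i * A * Es j \<noteq> 0\<^sub>m n n \<longleftrightarrow> B $$ (i,j) \<noteq> 0"
  using rank_one_sandwich_nonzero[OF _ A_car _ P_car Q_inverse(1) Q_inverse(3) Es_entry Es_entry] Es_carrier i j
  by (simp add: B_eq)

lemma B_tridiagonal: "i \<le> d \<Longrightarrow> j \<le> d \<Longrightarrow> j > i + 1 \<or> i > j + 1 \<Longrightarrow> B $$ (i,j) = 0"
  using Es_A_Es_nonzero_iff A_far by auto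

lemma B_upper: "i < d \<Longrightarrow> B $$ (i, Suc i) \<noteq> 0"
  using Es_A_Es_nonzero_iff A_near by auto

lemma B_lower: "i < d \<Longrightarrow> B $$ (Suc i, i) \<noteq> 0"
  using Es_A_Es_nonzero_iff A_near by auto

lemma ones_eigenvector: "B *\<^sub>v vec n (\<lambda>_. 1) = th r \<cdot>\<^sub>v vec n (\<lambda>_. 1)"
proof (rule eq_vecI)
  fix i assume "i < dim_vec (th r \<cdot>\<^sub>v vec n (\<lambda>_. 1))"
  hence i: "i \<le> d" by simp
  have "(B *\<^sub>v vec n (\<lambda>_. 1)) $ i = (\<Sum>j=0..<n. B $$ (i,j) * 1)"
    using B_car i by (simp add: scalar_prod_def)
  also have "\<dots> = th r"
    using tridiagonal_row_expansion[OF B_tridiagonal[OF i] i, of "\<lambda>_. 1"] row_sum[OF i]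
    by (simp del: sum.op_ivl_Suc)
  finally show "(B *\<^sub>v vec n (\<lambda>_. 1)) $ i = (th r \<cdot>\<^sub>v vec n (\<lambda>_. 1)) $ i" using i by simp
qed (use B_car in auto)

lemma coordinate_eigenvector:
  assumes "eigenvector A v \<mu>"
  shows "Q *\<^sub>v v \<in> carrier_vec n \<and> Q *\<^sub>v v \<noteq> 0\<^sub>v n \<and> B *\<^sub>v (Q *\<^sub>v v) = \<mu> \<cdot>\<^sub>v (Q *\<^sub>v v)"
proof -
  have v: "v \<in> carrier_vec n" "v \<noteq> 0\<^sub>v n" "A *\<^sub>v v = \<mu> \<cdot>\<^sub>v v"
    using assms A_car unfolding eigenvector_def by auto
  have Qv: "Q *\<^sub>v v \<in> carrier_vec n" using Q_inverse(1) v(1) by simp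
  have PQv: "P *\<^sub>v (Q *\<^sub>v v) = v"
    using P_car Q_inverse v(1) by (simp flip: assoc_mult_mat_vec[OF P_car Q_inverse(1) v(1)])
  have "B *\<^sub>v (Q *\<^sub>v v) = Q *\<^sub>v (A *\<^sub>v (P *\<^sub>v (Q *\<^sub>v v)))"
    unfolding B_eq using Q_inverse(1) A_car P_car Qv
    by (simp add: assoc_mult_mat_vec[of _ n n _ n] assoc_mult_mat[OF Q_inverse(1) A_car P_car])
  also have "\<dots> = \<mu> \<cdot>\<^sub>v (Q *\<^sub>v v)" using PQv v(3) mult_mat_vec[OF Q_inverse(1) v(1)] by simp
  finally have "B *\<^sub>v (Q *\<^sub>v v) = \<mu> \<cdot>\<^sub>v (Q *\<^sub>v v)" .
  moreover have "Q *\<^sub>v v \<noteq> 0\<^sub>v n"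
  proof
    assume "Q *\<^sub>v v = 0\<^sub>v n"
    hence "P *\<^sub>v (Q *\<^sub>v v) = 0\<^sub>v n" using P_car by (intro eq_vecI) auto
    thus False using PQv v(2) by simp
  qed
  ultimately show ?thesis using Qv by blast
qed

definition eigvec :: "nat \<Rightarrow> 'a vec" where
  "eigvec t = (if t = r then vec n (\<lambda>_. 1) else Q *\<^sub>v (SOME v. eigenvector A v (th t)))"

lemma eigvec:
  assumes t: "t \<le> d"
  shows "eigvec t \<in> carrier_vec n \<and> eigvec t \<noteq> 0\<^sub>v n \<and> B *\<^sub>v eigvec t = th t \<cdot>\<^sub>v eigvec t"
proof (cases "t = r")
  case True
  have "vec n (\<lambda>_. 1) \<noteq> (0\<^sub>v n :: 'a vec)"
  proof
    assume "vec n (\<lambda>_. 1) = (0\<^sub>v n :: 'a vec)"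
    hence "(vec n (\<lambda>_. 1) :: 'a vec) $ 0 = 0\<^sub>v n $ 0" by simp
    thus False by simp
  qed
  thus ?thesis using True ones_eigenvector unfolding eigvec_def by simp
next
  case False
  have "eigenvector A (SOME v. eigenvector A v (th t)) (th t)"
    using th_eig[OF t] unfolding eigenvalue_def by (rule someI_ex)
  thus ?thesis using False coordinate_eigenvector unfolding eigvec_def by simp
qed

definition UB :: "'a mat" where "UB = mat n n (\<lambda>(i,t). eigvec t $ i)"

lemma UB_carrier: "UB \<in> carrier_mat n n" unfolding UB_def by simp

lemma UB_entry: "i < n \<Longrightarrow> t < n \<Longrightarrow> UB $$ (i,t) = eigvec t $ i"
  unfolding UB_def by simp

lemma col_UB: "t < n \<Longrightarrow> col UB t = eigvec t"
  using eigvec[of t] unfolding UB_def by (auto intro!: eq_vecI)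

definition VB :: "'a mat" where
  "VB = (SOME V. V \<in> carrier_mat n n \<and> UB * V = 1\<^sub>m n \<and> V * UB = 1\<^sub>m n)"

lemma VB: "VB \<in> carrier_mat n n" "UB * VB = 1\<^sub>m n" "VB * UB = 1\<^sub>m n"
proof -
  obtain V where "V \<in> carrier_mat n n" "UB * V = 1\<^sub>m n" "V * UB = 1\<^sub>m n"
    by (rule eigenvector_matrix_invertible[OF B_car UB_carrier th_distinct])
      (use eigvec col_UB in auto)
  hence "VB \<in> carrier_mat n n \<and> UB * VB = 1\<^sub>m n \<and> VB * UB = 1\<^sub>m n"
    unfolding VB_def using someI[of "\<lambda>V. V \<in> carrier_mat n n \<and> UB * V = 1\<^sub>m n \<and> V * UB = 1\<^sub>m n" V]
    by blast
  thus "VB \<in> carrier_mat n n" "UB * VB = 1\<^sub>m n" "VB * UB = 1\<^sub>m n" by auto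
qed

definition UA :: "'a mat" where "UA = P * UB"
definition VA :: "'a mat" where "VA = VB * Q"

lemma UA_carrier: "UA \<in> carrier_mat n n" and VA_carrier: "VA \<in> carrier_mat n n"
  unfolding UA_def VA_def using P_car UB_carrier VB(1) Q_inverse(1) by auto

lemma UA_VA: "UA * VA = 1\<^sub>m n"
  using sandwich_assoc[OF P_car UB_carrier one_carrier_mat VB(1) Q_inverse(1)] P_car UB_carrier VB Q_inverse
  unfolding UA_def VA_def by simp

lemma VA_UA: "VA * UA = 1\<^sub>m n"
  using sandwich_assoc[OF VB(1) Q_inverse(1) one_carrier_mat P_car UB_carrier] P_car UB_carrier VB Q_inverse
  unfolding UA_def VA_def by simp

lemma A_UA_eigen:
  assumes t: "t \<le> d"
  shows "A *\<^sub>v col UA t = th t \<cdot>\<^sub>v col UA t"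
proof -
  have e: "eigvec t \<in> carrier_vec n" "B *\<^sub>v eigvec t = th t \<cdot>\<^sub>v eigvec t" using eigvec[OF t] by auto
  have "col UA t = P *\<^sub>v col UB t"
    unfolding UA_def using t by (intro col_mult2[OF P_car UB_carrier]) simp
  hence colUA: "col UA t = P *\<^sub>v eigvec t" using col_UB[of t] t by simp
  have "A *\<^sub>v col UA t = (A * P) *\<^sub>v eigvec t" using A_car P_car e(1) colUA by simp
  also have "\<dots> = P *\<^sub>v (B *\<^sub>v eigvec t)" unfolding B_repr using P_car B_car e(1) by simp
  also have "\<dots> = th t \<cdot>\<^sub>v col UA t" using colUA e mult_mat_vec[OF P_car] by simp
  finally show ?thesis .
qed

lemma prim_idem_entry:
  assumes t: "t \<le> d" and a: "a < n" and c: "c < n"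
  shows "prim_idem d A th t $$ (a,c) = UA $$ (a,t) * VA $$ (t,c)"
proof (rule projector_entries[OF prim_idem_carrier[OF A_car] UA_carrier VA_carrier UA_VA
      prim_idem_on_eigenvector_columns[OF A_car UA_carrier th_distinct A_UA_eigen t] _ a c])
  show "t < n" using t by simp
qed

lemma dual_mat_eq: "dual_mat d Es ths = P * mat_diag n ths * Q"
proof (rule eq_matI)
  fix k l assume "k < dim_row (P * mat_diag n ths * Q)" "l < dim_col (P * mat_diag n ths * Q)"
  hence k: "k < n" and l: "l < n" using P_car Q_inverse(1) by auto
  have "dual_mat d Es ths $$ (k,l) = (\<Sum>i\<le>d. ths i * (P $$ (k,i) * Q $$ (i,l)))"
    unfolding dual_mat_def using k l by (simp add: Es_entry)
  also have "\<dots> = (P * mat_diag n ths * Q) $$ (k,l)"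
    by (simp add: diag_sandwich_entry[OF P_car Q_inverse(1) k l] atLeast0LessThan lessThan_Suc_atMost mult_ac)
  finally show "dual_mat d Es ths $$ (k,l) = (P * mat_diag n ths * Q) $$ (k,l)" .
qed (use P_car Q_inverse(1) in \<open>auto simp: dual_mat_def\<close>)

lemma dual_mat_carrier: "dual_mat d Es ths \<in> carrier_mat n n"
  unfolding dual_mat_def by simp

lemma VA_dual_UA: "VA * dual_mat d Es ths * UA = VB * mat_diag n ths * UB"
  using sandwich_assoc[OF VB(1) Q_inverse(1) dual_mat_carrier P_car UB_carrier]
    conjugate_cancel[OF P_car Q_inverse(1) mat_diag_dim Q_inverse(3)]
  unfolding VA_def UA_def dual_mat_eq by simp

sublocale spectral: symmetrizable_eigenbasis n "\<lambda>i j. B $$ (i,j)" "\<lambda>i j. UB $$ (i,j)"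
  "\<lambda>i j. VB $$ (i,j)" "symmetrizer B" th ths r
proof
  fix i j assume "i < n" "j < n"
  thus "(\<Sum>k=0..<n. UB $$ (i,k) * VB $$ (k,j)) = (if i = j then 1 else 0)"
    and "(\<Sum>k=0..<n. VB $$ (i,k) * UB $$ (k,j)) = (if i = j then 1 else 0)"
    using inverse_mat_entries[OF UB_carrier VB(1) VB(2)] inverse_mat_entries[OF VB(1) UB_carrier VB(3)]
    by auto
  show "B $$ (j,i) * symmetrizer B j = symmetrizer B i * B $$ (i,j)"
    using symmetrizer_sym[OF B_tridiagonal B_lower] \<open>i < n\<close> \<open>j < n\<close> by simp
next
  fix k a assume k: "k < n" and a: "a < n"
  have "(B *\<^sub>v col UB a) $ k = (\<Sum>m=0..<n. B $$ (k,m) * UB $$ (m,a))"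
    using B_car UB_carrier k a by (simp add: scalar_prod_def)
  thus "(\<Sum>m=0..<n. B $$ (k,m) * UB $$ (m,a)) = th a * UB $$ (k,a)"
    using eigvec[of a] col_UB[OF a] UB_entry[OF k a] UB_carrier k a by (auto simp del: sum.op_ivl_Suc)
next
  fix k assume "k < n"
  thus "UB $$ (k,r) = 1" using r by (simp add: UB_entry eigvec_def)
next
  show "r < n" using r by simp
  show "inj_on th {0..<n}" using th_distinct by (simp add: atLeastLessThanSuc_atLeastAtMost)
  fix i assume "i < n"
  thus "symmetrizer B i \<noteq> 0" using symmetrizer_nonzero[OF B_upper B_lower] by simp
qed

lemma M_eq:
  assumes t: "t < n" and j: "j < n"
  shows "spectral.M t j = (VA * dual_mat d Es ths * UA) $$ (t,j)"
  unfolding VA_dual_UA spectral.M_def diag_sandwich_entry[OF VB(1) UB_carrier t j] ..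

text \<open>The three ingredients of the proposition in terms of \<open>M\<close>: adjacency in \<open>\<Delta>\<close>, the scalar
  \<open>a\<^sup>*\<^sub>r = tr (E\<^sub>r A\<^sup>*)\<close>, and \<open>A\<^sup>*\<close> being scalar.\<close>
lemma adjacency_iff:
  assumes t: "t \<le> d"
  shows "Delta_adj d A th Es ths r t \<longleftrightarrow> t \<noteq> r \<and> spectral.M r t \<noteq> 0"
proof -
  have "prim_idem d A th r * dual_mat d Es ths * prim_idem d A th t \<noteq> 0\<^sub>m n n
      \<longleftrightarrow> (VA * dual_mat d Es ths * UA) $$ (r,t) \<noteq> 0"
    using r t by (intro rank_one_sandwich_nonzero[OF prim_idem_carrier[OF A_car] dual_mat_carrier
          prim_idem_carrier[OF A_car] UA_carrier VA_carrier VA_UA]) (auto simp: prim_idem_entry)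
  thus ?thesis using r t by (auto simp: Delta_adj_def M_eq)
qed

lemma trace_eq: "mat_trace (prim_idem d A th r * dual_mat d Es ths) = spectral.M r r"
  using r by (simp add: M_eq rank_one_trace[OF prim_idem_carrier[OF A_car] dual_mat_carrier
        UA_carrier VA_carrier prim_idem_entry])

lemma dual_scalar_iff: "(\<exists>c. dual_mat d Es ths = c \<cdot>\<^sub>m 1\<^sub>m (d+1)) \<longleftrightarrow> (\<exists>c. \<forall>i<n. ths i = c)"
proof
  assume "\<exists>c. dual_mat d Es ths = c \<cdot>\<^sub>m 1\<^sub>m (d+1)"
  then obtain c where c: "dual_mat d Es ths = c \<cdot>\<^sub>m 1\<^sub>m n" by auto
  have "mat_diag n ths = Q * (P * mat_diag n ths * Q) * P"
    using conjugate_cancel[OF P_car Q_inverse(1) mat_diag_dim Q_inverse(3)] by simp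
  also have "\<dots> = Q * (c \<cdot>\<^sub>m 1\<^sub>m n) * P" using c by (simp add: dual_mat_eq)
  also have "\<dots> = c \<cdot>\<^sub>m (Q * P)"
    using mult_smult_distrib[OF Q_inverse(1) one_carrier_mat] mult_smult_assoc_mat[OF Q_inverse(1) P_car] Q_inverse(1) by simp
  also have "\<dots> = c \<cdot>\<^sub>m 1\<^sub>m n" using Q_inverse(3) by simp
  finally have diag: "mat_diag n ths = c \<cdot>\<^sub>m 1\<^sub>m n" .
  have "ths i = c" if "i < n" for i
    using arg_cong[OF diag, of "\<lambda>X. X $$ (i,i)"] that by (simp add: mat_diag_def)
  thus "\<exists>c. \<forall>i<n. ths i = c" by blast
next
  assume "\<exists>c. \<forall>i<n. ths i = c"
  then obtain c where c: "\<And>i. i < n \<Longrightarrow> ths i = c" by auto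
  have "mat_diag n ths = c \<cdot>\<^sub>m 1\<^sub>m n" using c by (auto simp: mat_diag_def)
  hence "dual_mat d Es ths = c \<cdot>\<^sub>m (P * Q)"
    using mult_smult_distrib[OF P_car one_carrier_mat] mult_smult_assoc_mat[OF P_car Q_inverse(1)] P_car
    by (simp add: dual_mat_eq)
  thus "\<exists>c. dual_mat d Es ths = c \<cdot>\<^sub>m 1\<^sub>m (d+1)" using Q_inverse(2) by auto
qed

lemma eigen_condition_iff:
  assumes s: "s \<le> d"
  shows "(\<forall>i \<le> d. coef_c B i * ths (i - 1) + coef_a B i * ths i + coef_b d B i * ths (i + 1)
                 - th r * ths i
               = (th s - th r) * (ths i - mat_trace (prim_idem d A th r * dual_mat d Es ths)))
     \<longleftrightarrow> (\<forall>t<n. t \<noteq> r \<longrightarrow> t \<noteq> s \<longrightarrow> spectral.M t r = 0)"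
proof -
  have "coef_c B i * ths (i - 1) + coef_a B i * ths i + coef_b d B i * ths (i + 1)
      = (\<Sum>j=0..<n. B $$ (i,j) * ths j)" if "i \<le> d" for i
    using tridiagonal_row_expansion[OF B_tridiagonal[OF that] that] by simp
  thus ?thesis
    using spectral.eigen_equation_iff[of s] s by (simp add: trace_eq less_Suc_eq_le del: sum.op_ivl_Suc)
qed

end

theorem proposition8p2:
  fixes d :: nat
    and Es :: "nat \<Rightarrow> 'a::field mat"
    and A :: "'a mat"
    and th ths :: "nat \<Rightarrow> 'a"
    and P B :: "'a mat"
    and r s :: nat
  assumes d1: "d \<ge> 1"
    and Es_carrier: "\<And>i. i \<le> d \<Longrightarrow> Es i \<in> carrier_mat (d+1) (d+1)"
    and Es_orth: "\<And>i j. i \<le> d \<Longrightarrow> j \<le> d \<Longrightarrow> Es i * Es j = (if i = j then Es i else 0\<^sub>m (d+1) (d+1))"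
    and Es_rank: "\<And>i. i \<le> d \<Longrightarrow> vec_space.rank (d+1) (Es i) = 1"
    and A_carrier: "A \<in> carrier_mat (d+1) (d+1)"
    and A_far: "\<And>i j. i \<le> d \<Longrightarrow> j \<le> d \<Longrightarrow> j > i + 1 \<or> i > j + 1 \<Longrightarrow> Es i * A * Es j = 0\<^sub>m (d+1) (d+1)"
    and A_near: "\<And>i j. i \<le> d \<Longrightarrow> j \<le> d \<Longrightarrow> j = i + 1 \<or> i = j + 1 \<Longrightarrow> Es i * A * Es j \<noteq> 0\<^sub>m (d+1) (d+1)"
    and th_distinct: "inj_on th {0..d}"
    and th_eig: "\<And>i. i \<le> d \<Longrightarrow> eigenvalue A (th i)"
    and P_carrier: "P \<in> carrier_mat (d+1) (d+1)"
    and P_basis: "invertible_mat P"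
    and P_feasible: "\<And>i. i \<le> d \<Longrightarrow> \<exists>w \<in> carrier_vec (d+1). col P i = Es i *\<^sub>v w"
    and B_carrier: "B \<in> carrier_mat (d+1) (d+1)"
    and B_repr: "A * P = P * B"
    and r: "r \<le> d" and s: "s \<le> d" and sr: "s \<noteq> r"
    and row_sum: "\<And>i. i \<le> d \<Longrightarrow> coef_c B i + coef_a B i + coef_b d B i = th r"
  shows "((Delta_adj d A th Es ths r s) \<and> (\<forall>t \<le> d. t \<noteq> s \<longrightarrow> \<not> Delta_adj d A th Es ths r t))
     \<longleftrightarrow>
     ((\<forall>i \<le> d. coef_c B i * ths (i - 1) + coef_a B i * ths i + coef_b d B i * ths (i + 1)
                 - th r * ths i
               = (th s - th r) * (ths i - mat_trace (prim_idem d A th r * dual_mat d Es ths)))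
      \<and> \<not> (\<exists>c. dual_mat d Es ths = c \<cdot>\<^sub>m 1\<^sub>m (d+1)))"
proof -
  interpret feasible_representation d Es A th ths P B r
    by (rule feasible_representation.intro) (fact assms)+
  have s': "s < Suc d" using s by simp
  have "(Delta_adj d A th Es ths r s \<and> (\<forall>t \<le> d. t \<noteq> s \<longrightarrow> \<not> Delta_adj d A th Es ths r t))
      \<longleftrightarrow> (spectral.M r s \<noteq> 0 \<and> (\<forall>t<Suc d. t \<noteq> r \<longrightarrow> t \<noteq> s \<longrightarrow> spectral.M r t = 0))"
    using adjacency_iff s sr by (auto simp: less_Suc_eq_le)
  also have "\<dots> \<longleftrightarrow> (\<forall>t<Suc d. t \<noteq> r \<longrightarrow> t \<noteq> s \<longrightarrow> spectral.M t r = 0)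
      \<and> \<not> (\<exists>c. \<forall>i<Suc d. ths i = c)"
    by (rule spectral.single_neighbour_iff[OF s' sr])
  finally show ?thesis
    by (simp only: eigen_condition_iff[OF s] dual_scalar_iff)
qed

end
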